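(* Let $P$ be a finite poset, $R$ a commutative unital ring, and $D$ a derivation of $I^3(P,R)$. Then for all $x<y$ in $P$, $D(e_{xxy})=D(e_{xyy})=0$.
   Context: For a finite poset $P$, $P^3_\le=\{(x,y,z)\in P^3: x\le y\le z\}$, and $I^3(P,R)$ is the $R$-module of functions $f:P^3_\le\to R$ with multiplication $(fg)(x_1,x_2,x_3)=\sum f(x_1,y_1,y_2)g(y_1,y_2,x_3)$ over all $x_1\le y_1\le x_2\le y_2\le x_3$. For $x\le y\le z$, $e_{xyz}$ is the function equal to $1$ at $(x,y,z)$ and $0$ elsewhere. A derivation is an $R$-linear map $D:I^3(P,R)\to I^3(P,R)$ with $D(fg)=D(f)g+fD(g)$. *)

theory Defs
  imports Main
begin

text \<open>The finite poset P is the type 'a (class finite, order); elements of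
  I^3(P,R) are functions 'a => 'a => 'a => 'r vanishing outside P^3_le.\<close>

definition I3 :: "('a::{finite,order} \<Rightarrow> 'a \<Rightarrow> 'a \<Rightarrow> 'r::comm_ring_1) set" where
  "I3 = {f. \<forall>x y z. \<not> (x \<le> y \<and> y \<le> z) \<longrightarrow> f x y z = 0}"

definition mult3 :: "('a::{finite,order} \<Rightarrow> 'a \<Rightarrow> 'a \<Rightarrow> 'r::comm_ring_1)
    \<Rightarrow> ('a \<Rightarrow> 'a \<Rightarrow> 'a \<Rightarrow> 'r) \<Rightarrow> ('a \<Rightarrow> 'a \<Rightarrow> 'a \<Rightarrow> 'r)" where
  "mult3 f g = (\<lambda>x1 x2 x3.
     \<Sum>(y1, y2) \<in> {(y1, y2). x1 \<le> y1 \<and> y1 \<le> x2 \<and> x2 \<le> y2 \<and> y2 \<le> x3}.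
        f x1 y1 y2 * g y1 y2 x3)"

definition e3 :: "'a::{finite,order} \<Rightarrow> 'a \<Rightarrow> 'a \<Rightarrow> ('a \<Rightarrow> 'a \<Rightarrow> 'a \<Rightarrow> 'r::comm_ring_1)" where
  "e3 x y z = (\<lambda>a b c. if a = x \<and> b = y \<and> c = z then 1 else 0)"

definition is_derivation3 ::
  "(('a::{finite,order} \<Rightarrow> 'a \<Rightarrow> 'a \<Rightarrow> 'r::comm_ring_1) \<Rightarrow> ('a \<Rightarrow> 'a \<Rightarrow> 'a \<Rightarrow> 'r)) \<Rightarrow> bool" where
  "is_derivation3 D \<longleftrightarrow>
     (\<forall>f \<in> I3. D f \<in> I3) \<and>
     (\<forall>f \<in> I3. \<forall>g \<in> I3. D (\<lambda>a b c. f a b c + g a b c) = (\<lambda>a b c. D f a b c + D g a b c)) \<and>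
     (\<forall>r. \<forall>f \<in> I3. D (\<lambda>a b c. r * f a b c) = (\<lambda>a b c. r * D f a b c)) \<and>
     (\<forall>f \<in> I3. \<forall>g \<in> I3. D (mult3 f g) =
         (\<lambda>a b c. mult3 (D f) g a b c + mult3 f (D g) a b c))"

end

theory Submission
  imports Defs
begin

text \<open>A derivation kills every diagonal idempotent e_zzz: the Leibniz rule on e_zzz e_zzz = e_zzz
  and on the vanishing products e_ppz e_zzz and e_zzz e_zrr (p < z < r) leaves no room for a
  nonzero value.  Hence D commutes with multiplication by e_xxx and e_yyy, and since
  e_xxy = e_xxx e_xxy and e_xyy = e_xyy e_yyy, D(e_xxy) lives on the entries (x,x,r) and D(e_xyy)
  on the entries (p,y,y); the vanishing products e_xxy e_xrr (r \<noteq> y) and e_ppy e_xyy (p \<noteq> x)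
  leave only the corner values a = D(e_xxy)(x,x,y) and b = D(e_xyy)(x,y,y).  Finally
  S = e_xxy e_xyy satisfies e_xxx S = e_xxy and S e_yyy = e_xyy, so evaluating D S at both
  corners gives a = a + b = b, whence a = b = 0.\<close>

lemma mult3_e3_left:
  "mult3 (e3 a b c) g p q r =
     (if p = a \<and> a \<le> b \<and> b \<le> q \<and> q \<le> c \<and> c \<le> r then g b c r else (0::'r::comm_ring_1))"
proof -
  let ?S = "{(y1, y2). p \<le> y1 \<and> y1 \<le> q \<and> q \<le> y2 \<and> y2 \<le> (r::'a::{finite,order})}"
  have "mult3 (e3 a b c) g p q r = (\<Sum>z\<in>?S. if z = (b, c) then (if p = a then g b c r else 0) else 0)"
    unfolding mult3_def e3_def by (rule sum.cong) (auto split: if_splits)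
  also have "\<dots> = (if (b, c) \<in> ?S then (if p = a then g b c r else 0) else 0)"
    by (rule sum.delta) simp
  finally show ?thesis by auto
qed

lemma mult3_e3_right:
  "mult3 f (e3 b c d) p q r =
     (if r = d \<and> p \<le> b \<and> b \<le> q \<and> q \<le> c \<and> c \<le> d then f p b c else (0::'r::comm_ring_1))"
proof -
  let ?S = "{(y1, y2). p \<le> y1 \<and> y1 \<le> q \<and> q \<le> y2 \<and> y2 \<le> (r::'a::{finite,order})}"
  have "mult3 f (e3 b c d) p q r = (\<Sum>z\<in>?S. if z = (b, c) then (if r = d then f p b c else 0) else 0)"
    unfolding mult3_def e3_def by (rule sum.cong) (auto split: if_splits)
  also have "\<dots> = (if (b, c) \<in> ?S then (if r = d then f p b c else 0) else 0)"
    by (rule sum.delta) simp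
  finally show ?thesis by auto
qed

lemma mult3_zero_left [simp]: "mult3 (\<lambda>_ _ _. 0) g = (\<lambda>_ _ _. (0::'r::comm_ring_1))"
  unfolding mult3_def by simp

lemma mult3_zero_right [simp]: "mult3 f (\<lambda>_ _ _. 0) = (\<lambda>_ _ _. (0::'r::comm_ring_1))"
  unfolding mult3_def by simp

lemma e3_in_I3: "a \<le> b \<Longrightarrow> b \<le> c \<Longrightarrow> e3 a b c \<in> I3"
  unfolding I3_def e3_def by auto

lemma mult3_in_I3: "mult3 f g \<in> I3"
  unfolding I3_def mult3_def by (auto intro!: sum.neutral dest: order_trans)

lemma I3_eq_zero: "f \<in> I3 \<Longrightarrow> \<not> (x \<le> y \<and> y \<le> z) \<Longrightarrow> f x y z = 0"
  unfolding I3_def by auto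

lemma derivation3_in_I3: "is_derivation3 D \<Longrightarrow> f \<in> I3 \<Longrightarrow> D f \<in> I3"
  unfolding is_derivation3_def by simp

lemma derivation3_mult3:
  assumes "is_derivation3 D" "f \<in> I3" "g \<in> I3"
  shows "D (mult3 f g) p q r = mult3 (D f) g p q r + mult3 f (D g) p q r"
  using assms unfolding is_derivation3_def by simp

lemma derivation3_smult:
  "is_derivation3 D \<Longrightarrow> f \<in> I3 \<Longrightarrow> D (\<lambda>a b c. s * f a b c) = (\<lambda>a b c. s * D f a b c)"
  unfolding is_derivation3_def by blast

lemma derivation3_zero:
  assumes "is_derivation3 (D :: ('a::{finite,order} \<Rightarrow> 'a \<Rightarrow> 'a \<Rightarrow> 'r::comm_ring_1) \<Rightarrow> _)"
  shows "D (\<lambda>_ _ _. 0) = (\<lambda>_ _ _. 0)"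
proof -
  have "(\<lambda>_ _ _. 0) \<in> (I3 :: ('a \<Rightarrow> 'a \<Rightarrow> 'a \<Rightarrow> 'r) set)"
    unfolding I3_def by simp
  from derivation3_smult[OF assms this, of 0] show ?thesis by simp
qed

lemma derivation3_mult3_eq_zero:
  assumes "is_derivation3 D" "f \<in> I3" "g \<in> I3" "mult3 f g = (\<lambda>_ _ _. 0)"
  shows "mult3 (D f) g p q r + mult3 f (D g) p q r = 0"
  using derivation3_mult3[OF assms(1-3), of p q r] assms(4) derivation3_zero[OF assms(1)] by simp

lemma derivation3_mult3_kernel_left:
  assumes "is_derivation3 D" "e \<in> I3" "f \<in> I3" "D e = (\<lambda>_ _ _. 0)"
  shows "D (mult3 e f) = mult3 e (D f)"
  using derivation3_mult3[OF assms(1-3)] assms(4) by (simp add: fun_eq_iff)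

lemma derivation3_mult3_kernel_right:
  assumes "is_derivation3 D" "f \<in> I3" "e \<in> I3" "D e = (\<lambda>_ _ _. 0)"
  shows "D (mult3 f e) = mult3 (D f) e"
  using derivation3_mult3[OF assms(1-3)] assms(4) by (simp add: fun_eq_iff)

lemma derivation3_e3_diag:
  assumes D: "is_derivation3 D"
  shows "D (e3 z z z) = (\<lambda>_ _ _. 0)"
proof -
  define F where "F = D (e3 z z z)"
  have ezzz: "e3 z z z \<in> I3" by (rule e3_in_I3) auto
  have FI: "F \<in> I3" unfolding F_def by (rule derivation3_in_I3[OF D ezzz])
  have idem: "mult3 (e3 z z z) (e3 z z z) = e3 z z z"
    by (simp only: fun_eq_iff mult3_e3_left) (auto simp: e3_def)
  have F_eq: "F p q r = (if r = z \<and> p \<le> z \<and> q = z then F p z z else 0)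
      + (if p = z \<and> q = z \<and> z \<le> r then F z z r else 0)" for p q r
    using derivation3_mult3[OF D ezzz ezzz, of p q r] unfolding idem F_def[symmetric]
    by (auto simp: mult3_e3_left mult3_e3_right)
  have "F z z z = 0" using F_eq[of z z z] by simp
  moreover have "F p z z = 0" if "p < z" for p
  proof -
    have "mult3 (e3 p p z) (e3 z z z) = (\<lambda>_ _ _. 0)"
      using that by (simp only: fun_eq_iff mult3_e3_left) (auto simp: e3_def)
    from derivation3_mult3_eq_zero[OF D _ ezzz this, of p p z] that show ?thesis
      by (auto simp: e3_in_I3 mult3_e3_left mult3_e3_right F_def less_le_not_le)
  qed
  moreover have "F z z r = 0" if "z < r" for r
  proof -
    have "mult3 (e3 z z z) (e3 z r r) = (\<lambda>_ _ _. 0)"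
      using that by (simp only: fun_eq_iff mult3_e3_left) (auto simp: e3_def)
    from derivation3_mult3_eq_zero[OF D ezzz _ this, of z r r] that show ?thesis
      by (auto simp: e3_in_I3 mult3_e3_left mult3_e3_right F_def less_le_not_le)
  qed
  ultimately have "F p z z = 0" "F z z r = 0" for p r
    using I3_eq_zero[OF FI] by (metis order.order_iff_strict)+
  then have "F p q r = 0" for p q r using F_eq[of p q r] by simp
  then show ?thesis unfolding F_def by (simp add: fun_eq_iff)
qed

lemma derivation3_e3_lower_support:
  fixes D :: "('a::{finite,order} \<Rightarrow> 'a \<Rightarrow> 'a \<Rightarrow> 'r::comm_ring_1) \<Rightarrow> _"
  assumes D: "is_derivation3 D" and "x < y"
  shows "D (e3 x x y) p q r = (if p = x \<and> q = x \<and> r = y then D (e3 x x y) x x y else 0)"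
proof -
  define G where "G = D (e3 x x y)"
  have exxx: "e3 x x x \<in> I3" and exxy: "e3 x x y \<in> I3"
    using \<open>x < y\<close> by (auto intro: e3_in_I3)
  have "mult3 (e3 x x x) (e3 x x y) = (e3 x x y :: 'a \<Rightarrow> 'a \<Rightarrow> 'a \<Rightarrow> 'r)"
    using \<open>x < y\<close> by (simp only: fun_eq_iff mult3_e3_left) (auto simp: e3_def)
  then have "G = mult3 (e3 x x x) G"
    using derivation3_mult3_kernel_left[OF D exxx exxy derivation3_e3_diag[OF D]]
    unfolding G_def by simp
  then have "G p q r = mult3 (e3 x x x) G p q r" for p q r
    by (rule arg_cong[where f = "\<lambda>h. h p q r"])
  then have G_eq: "G p q r = (if p = x \<and> q = x \<and> x \<le> r then G x x r else 0)" for p q r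
    unfolding mult3_e3_left by (metis order_antisym)
  have G_off: "G x x r = 0" if "r \<noteq> y" "x \<le> r" for r
  proof -
    have "mult3 (e3 x x y) (e3 x r r) = (\<lambda>_ _ _. 0)"
      using that by (simp only: fun_eq_iff mult3_e3_left) (auto simp: e3_def)
    from derivation3_mult3_eq_zero[OF D exxy _ this, of x r r] that show ?thesis
      by (auto simp: e3_in_I3 mult3_e3_left mult3_e3_right G_def split: if_splits dest: order_antisym)
  qed
  show ?thesis
  proof (cases "r = y")
    case True
    then show ?thesis using G_eq[of p q y] less_imp_le[OF \<open>x < y\<close>] unfolding G_def[symmetric] by simp
  next
    case False
    then show ?thesis using G_eq[of p q r] G_off[of r] unfolding G_def[symmetric] by auto
  qed
qed

lemma derivation3_e3_upper_support:
  fixes D :: "('a::{finite,order} \<Rightarrow> 'a \<Rightarrow> 'a \<Rightarrow> 'r::comm_ring_1) \<Rightarrow> _"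
  assumes D: "is_derivation3 D" and "x < y"
  shows "D (e3 x y y) p q r = (if p = x \<and> q = y \<and> r = y then D (e3 x y y) x y y else 0)"
proof -
  define H where "H = D (e3 x y y)"
  have eyyy: "e3 y y y \<in> I3" and exyy: "e3 x y y \<in> I3"
    using \<open>x < y\<close> by (auto intro: e3_in_I3)
  have "mult3 (e3 x y y) (e3 y y y) = (e3 x y y :: 'a \<Rightarrow> 'a \<Rightarrow> 'a \<Rightarrow> 'r)"
    using \<open>x < y\<close> by (simp only: fun_eq_iff mult3_e3_right) (auto simp: e3_def)
  then have "H = mult3 H (e3 y y y)"
    using derivation3_mult3_kernel_right[OF D exyy eyyy derivation3_e3_diag[OF D]]
    unfolding H_def by simp
  then have "H p q r = mult3 H (e3 y y y) p q r" for p q r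
    by (rule arg_cong[where f = "\<lambda>h. h p q r"])
  then have H_eq: "H p q r = (if r = y \<and> q = y \<and> p \<le> y then H p y y else 0)" for p q r
    unfolding mult3_e3_right by (metis order_antisym)
  have H_off: "H p y y = 0" if "p \<noteq> x" "p \<le> y" for p
  proof -
    have "mult3 (e3 p p y) (e3 x y y) = (\<lambda>_ _ _. 0)"
      using that by (simp only: fun_eq_iff mult3_e3_left) (auto simp: e3_def)
    from derivation3_mult3_eq_zero[OF D _ exyy this, of p p y] that show ?thesis
      by (auto simp: e3_in_I3 mult3_e3_left mult3_e3_right H_def split: if_splits dest: order_antisym)
  qed
  show ?thesis
  proof (cases "p = x")
    case True
    then show ?thesis using H_eq[of x q r] less_imp_le[OF \<open>x < y\<close>] unfolding H_def[symmetric] by simp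
  next
    case False
    then show ?thesis using H_eq[of p q r] H_off[of p] unfolding H_def[symmetric] by auto
  qed
qed

lemma derivation3_e3_corner_coeffs:
  fixes D :: "('a::{finite,order} \<Rightarrow> 'a \<Rightarrow> 'a \<Rightarrow> 'r::comm_ring_1) \<Rightarrow> _"
  assumes D: "is_derivation3 D" and "x \<le> y"
  shows "D (e3 x x y) x x y = 0 \<and> D (e3 x y y) x y y = 0"
proof -
  define S where "S = mult3 (e3 x x y) (e3 x y y :: 'a \<Rightarrow> 'a \<Rightarrow> 'a \<Rightarrow> 'r)"
  have exxx: "e3 x x x \<in> I3" and exxy: "e3 x x y \<in> I3" and eyyy: "e3 y y y \<in> I3"
    and exyy: "e3 x y y \<in> I3"
    using \<open>x \<le> y\<close> by (auto intro: e3_in_I3)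
  have SI: "S \<in> I3"
    unfolding S_def by (rule mult3_in_I3)
  have "mult3 (e3 x x x) S = e3 x x y"
    using \<open>x \<le> y\<close> unfolding S_def
    by (simp only: fun_eq_iff mult3_e3_left mult3_e3_right) (auto simp: e3_def intro: order_antisym)
  then have lower: "D (e3 x x y) = mult3 (e3 x x x) (D S)"
    using derivation3_mult3_kernel_left[OF D exxx SI derivation3_e3_diag[OF D]] by simp
  have "mult3 S (e3 y y y) = e3 x y y"
    using \<open>x \<le> y\<close> unfolding S_def
    by (simp only: fun_eq_iff mult3_e3_left mult3_e3_right) (auto simp: e3_def intro: order_antisym)
  then have upper: "D (e3 x y y) = mult3 (D S) (e3 y y y)"
    using derivation3_mult3_kernel_right[OF D SI eyyy derivation3_e3_diag[OF D]] by simp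
  have DS: "D S p q r = mult3 (D (e3 x x y)) (e3 x y y) p q r + mult3 (e3 x x y) (D (e3 x y y)) p q r"
    for p q r
    unfolding S_def by (rule derivation3_mult3[OF D exxy exyy])
  have "D (e3 x x y) x x y = D S x x y"
    using \<open>x \<le> y\<close> by (simp add: lower mult3_e3_left)
  also have "\<dots> = D (e3 x x y) x x y + D (e3 x y y) x y y"
    using DS[of x x y] \<open>x \<le> y\<close> by (simp add: mult3_e3_left mult3_e3_right)
  finally have upper_corner: "D (e3 x y y) x y y = 0" by simp
  have "D (e3 x y y) x y y = D S x y y"
    using \<open>x \<le> y\<close> by (simp add: upper mult3_e3_right)
  also have "\<dots> = D (e3 x x y) x x y + D (e3 x y y) x y y"
    using DS[of x y y] \<open>x \<le> y\<close> by (simp add: mult3_e3_left mult3_e3_right)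
  finally have lower_corner: "D (e3 x x y) x x y = 0" by simp
  from lower_corner upper_corner show ?thesis ..
qed

theorem lemma4p5:
  fixes D :: "('a::{finite,order} \<Rightarrow> 'a \<Rightarrow> 'a \<Rightarrow> 'r::comm_ring_1) \<Rightarrow> ('a \<Rightarrow> 'a \<Rightarrow> 'a \<Rightarrow> 'r)"
    and x y :: 'a
  assumes "is_derivation3 D"
    and "x < y"
  shows "D (e3 x x y) = (\<lambda>_ _ _. 0) \<and> D (e3 x y y) = (\<lambda>_ _ _. 0)"
proof -
  have corners: "D (e3 x x y) x x y = 0" "D (e3 x y y) x y y = 0"
    using derivation3_e3_corner_coeffs[OF assms(1) less_imp_le[OF assms(2)]] by simp_all
  have "D (e3 x x y) p q r = 0" for p q r
    using derivation3_e3_lower_support[OF assms, of p q r] corners by simp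
  moreover have "D (e3 x y y) p q r = 0" for p q r
    using derivation3_e3_upper_support[OF assms, of p q r] corners by simp
  ultimately show ?thesis by (simp add: fun_eq_iff)
qed

end
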